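(* Let $g:[0,1]^n\rightarrow\mathbb{R}$ be twice continuously differentiable (on an open neighborhood of $[0,1]^n$), and for $\boldsymbol{w}\in[0,1]^n$ let $H(\boldsymbol{w})$ denote the Hessian of $g$ at $\boldsymbol{w}$. Let $$K := \max_{\boldsymbol{w}\in[0,1]^n,\ i\in[n]} \Big|\sum_{j\neq i} H_{ij}(\boldsymbol{w})\Big|.$$ Then for every $i\in[n]$, $$\left|\int_{0}^1 \frac{\partial g}{\partial w_i}(t\mathbf{1})\, dt - \big(g(\mathbf{1}_i) - g(\mathbf{0})\big)\right| \le \frac{K}{2},$$ where $\mathbf{1}\in\mathbb{R}^n$ is the all-ones vector, $\mathbf{0}$ is the zero vector, and $\mathbf{1}_i$ is the $i$-th standard basis vector of $\mathbb{R}^n$.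
   Context: $[n]=\{1,\dots,n\}$. The quantity $\int_0^1 \frac{\partial g}{\partial w_i}(t\mathbf{1})\,dt$ is the (path) integrated-gradients attribution of feature $i$ along the straight line from $\mathbf{0}$ to $\mathbf{1}$, and $g(\mathbf{1}_i)-g(\mathbf{0})$ is the marginal gain of feature $i$ at the empty set for the set function $G(S)=g(\mathbf{1}_S)$, where $\mathbf{1}_S\in\{0,1\}^n$ is the indicator vector of $S\subseteq[n]$. *)

theory Defs
  imports "HOL-Analysis.Analysis"
begin

end

theory Submission
  imports Defs
begin

text \<open>Along the diagonal and along the \<open>i\<close>-th edge of the cube the \<open>i\<close>-th partial derivatives
  at the same parameter \<open>t\<close> differ by a step \<open>t(\<one> - \<one>\<^sub>i)\<close> that has no \<open>i\<close>-th component, so by the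
  mean value theorem their difference is \<open>t\<close> times an off-diagonal row sum of the Hessian,
  hence at most \<open>tK\<close> in absolute value. Integrating over \<open>t \<in> [0,1]\<close>, the edge integral is
  \<open>g(\<one>\<^sub>i) - g(\<zero>)\<close> by the fundamental theorem of calculus, and \<open>\<integral>\<^sub>0\<^sup>1 tK dt = K/2\<close>.\<close>

lemma has_real_derivative_along_line:
  fixes g :: "real ^ 'n \<Rightarrow> real"
  assumes "(g has_derivative (\<lambda>h. \<Sum>j\<in>UNIV. D j (a + t *\<^sub>R v) * h $ j)) (at (a + t *\<^sub>R v))"
  shows "((\<lambda>s. g (a + s *\<^sub>R v)) has_real_derivative (\<Sum>j\<in>UNIV. D j (a + t *\<^sub>R v) * v $ j)) (at t)"
proof -
  have "((\<lambda>s. g (a + s *\<^sub>R v)) has_derivative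
          (\<lambda>h. \<Sum>j\<in>UNIV. D j (a + t *\<^sub>R v) * (h *\<^sub>R v) $ j)) (at t)"
  proof -
    have "((\<lambda>s. a + s *\<^sub>R v) has_derivative (\<lambda>h. h *\<^sub>R v)) (at t)"
      by (auto intro!: derivative_eq_intros)
    from diff_chain_at[OF this assms] show ?thesis by (simp add: o_def)
  qed
  moreover have "(\<lambda>h. \<Sum>j\<in>UNIV. D j (a + t *\<^sub>R v) * (h *\<^sub>R v) $ j)
      = (*) (\<Sum>j\<in>UNIV. D j (a + t *\<^sub>R v) * v $ j)"
    by (simp add: fun_eq_iff sum_distrib_left ac_simps)
  ultimately show ?thesis
    by (simp add: has_field_derivative_def)
qed

lemma has_integral_gradient_along_line:
  fixes g :: "real ^ 'n \<Rightarrow> real"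
  assumes grad: "\<And>x. x \<in> U \<Longrightarrow> (g has_derivative (\<lambda>h. \<Sum>j\<in>UNIV. D j x * h $ j)) (at x)"
    and line: "\<And>t. t \<in> {0..1} \<Longrightarrow> a + t *\<^sub>R v \<in> U"
  shows "((\<lambda>t. \<Sum>j\<in>UNIV. D j (a + t *\<^sub>R v) * v $ j) has_integral g (a + v) - g a) {0..1}"
proof -
  have "((\<lambda>t. \<Sum>j\<in>UNIV. D j (a + t *\<^sub>R v) * v $ j) has_integral
          g (a + 1 *\<^sub>R v) - g (a + 0 *\<^sub>R v)) {0..1}"
    by (rule fundamental_theorem_of_calculus)
      (auto simp flip: has_real_derivative_iff_has_vector_derivative
        intro!: has_field_derivative_at_within has_real_derivative_along_line grad line)
  then show ?thesis by simp
qed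

lemma gradient_mean_value_along_line:
  fixes g :: "real ^ 'n \<Rightarrow> real"
  assumes grad: "\<And>x. x \<in> U \<Longrightarrow> (g has_derivative (\<lambda>h. \<Sum>j\<in>UNIV. D j x * h $ j)) (at x)"
    and line: "\<And>t. t \<in> {0..1} \<Longrightarrow> a + t *\<^sub>R v \<in> U"
  obtains \<xi> where "\<xi> \<in> {0<..<1}" and "g (a + v) - g a = (\<Sum>j\<in>UNIV. D j (a + \<xi> *\<^sub>R v) * v $ j)"
proof -
  have "DERIV (\<lambda>s. g (a + s *\<^sub>R v)) s :> (\<Sum>j\<in>UNIV. D j (a + s *\<^sub>R v) * v $ j)"
    if "0 \<le> s" "s \<le> 1" for s
    using that by (intro has_real_derivative_along_line grad line) simp
  from MVT2[OF zero_less_one this] obtain \<xi> where "0 < \<xi>" "\<xi> < 1"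
    and "g (a + 1 *\<^sub>R v) - g (a + 0 *\<^sub>R v) = (1 - 0) * (\<Sum>j\<in>UNIV. D j (a + \<xi> *\<^sub>R v) * v $ j)"
    by blast
  with that show ?thesis by simp
qed

lemma sum_mult_axis_1: "(\<Sum>j\<in>UNIV. f j * axis i (1::'a::comm_ring_1) $ j) = f i"
  by (simp add: axis_def if_distrib cong: if_cong)

lemma bdd_above_continuous_family:
  fixes f :: "'k::finite \<Rightarrow> 'a::topological_space \<Rightarrow> real"
  assumes "compact S" and "\<And>k. continuous_on S (f k)"
  shows "bdd_above ((\<lambda>p. f (snd p) (fst p)) ` (S \<times> UNIV))"
proof -
  have "(\<lambda>p. f (snd p) (fst p)) ` (S \<times> UNIV) = (\<Union>k. f k ` S)"
    by force
  moreover have "bdd_above (f k ` S)" for k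
    by (intro bounded_imp_bdd_above compact_imp_bounded compact_continuous_image assms)
  ultimately show ?thesis by simp
qed

lemma partial_diagonal_minus_partial_edge_bound:
  fixes f :: "real ^ 'n \<Rightarrow> real" and G :: "'n \<Rightarrow> real ^ 'n \<Rightarrow> real"
  assumes grad: "\<And>x. x \<in> U \<Longrightarrow> (f has_derivative (\<lambda>h. \<Sum>j\<in>UNIV. G j x * h $ j)) (at x)"
    and cube: "cbox 0 1 \<subseteq> U"
    and bound: "\<And>x. x \<in> cbox 0 1 \<Longrightarrow> \<bar>\<Sum>j\<in>UNIV - {i}. G j x\<bar> \<le> K"
    and t: "t \<in> {0..1}"
  shows "\<bar>f (t *\<^sub>R 1) - f (t *\<^sub>R axis i 1)\<bar> \<le> t * K"
proof -
  define a :: "real ^ 'n" where "a = t *\<^sub>R axis i 1"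
  define v :: "real ^ 'n" where "v = t *\<^sub>R 1 - a"
  have v: "v $ j = (if j = i then 0 else t)" for j
    by (simp add: v_def a_def axis_def)
  have in_cube: "a + s *\<^sub>R v \<in> cbox 0 1" if "s \<in> {0..1}" for s
    using that t by (auto simp: mem_box_cart v a_def axis_def mult_le_one)
  have line: "a + s *\<^sub>R v \<in> U" if "s \<in> {0..1}" for s
    using in_cube[OF that] cube by blast
  obtain \<xi> where "\<xi> \<in> {0<..<1}" and mvt: "f (a + v) - f a = (\<Sum>j\<in>UNIV. G j (a + \<xi> *\<^sub>R v) * v $ j)"
    by (rule gradient_mean_value_along_line[OF grad line])
  have "(\<Sum>j\<in>UNIV. G j (a + \<xi> *\<^sub>R v) * v $ j) = t * (\<Sum>j\<in>UNIV - {i}. G j (a + \<xi> *\<^sub>R v))"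
    by (simp add: v sum.remove[of UNIV i] sum_distrib_left mult.commute)
  then have "\<bar>f (t *\<^sub>R 1) - f (t *\<^sub>R axis i 1)\<bar> = t * \<bar>\<Sum>j\<in>UNIV - {i}. G j (a + \<xi> *\<^sub>R v)\<bar>"
    using mvt t by (simp add: v_def a_def abs_mult)
  also have "\<dots> \<le> t * K"
    using bound in_cube \<open>\<xi> \<in> {0<..<1}\<close> t by (auto intro!: mult_left_mono)
  finally show ?thesis .
qed

lemma has_integral_id_times_const: "((\<lambda>t. t * K) has_integral K / 2) {0..1::real}"
proof -
  have "((\<lambda>t. t * K) has_integral (1\<^sup>2 / 2 * K - 0\<^sup>2 / 2 * K)) {0..1::real}"
    by (rule fundamental_theorem_of_calculus)
      (auto simp: has_vector_derivative_def intro!: derivative_eq_intros)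
  then show ?thesis by simp
qed

theorem lemma1:
  fixes g :: "real ^ 'n \<Rightarrow> real"
    and D :: "'n \<Rightarrow> real ^ 'n \<Rightarrow> real"
    and H :: "'n \<Rightarrow> 'n \<Rightarrow> real ^ 'n \<Rightarrow> real"
    and U :: "(real ^ 'n) set"
    and i :: 'n
  assumes U_open: "open U"
    and U_cube: "cbox 0 1 \<subseteq> U"
    and grad: "\<And>x. x \<in> U \<Longrightarrow> (g has_derivative (\<lambda>h. \<Sum>j\<in>UNIV. D j x * h $ j)) (at x)"
    and hess: "\<And>k x. x \<in> U \<Longrightarrow> (D k has_derivative (\<lambda>h. \<Sum>j\<in>UNIV. H k j x * h $ j)) (at x)"
    and hess_cont: "\<And>k j. continuous_on U (H k j)"
  shows "\<bar>integral {0..1} (\<lambda>t. D i (t *\<^sub>R 1)) - (g (axis i 1) - g 0)\<bar>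
           \<le> (SUP p\<in>cbox 0 1 \<times> UNIV. \<bar>\<Sum>j\<in>UNIV - {snd p}. H (snd p) j (fst p)\<bar>) / 2"
proof -
  define K where "K = (SUP p\<in>cbox 0 1 \<times> UNIV. \<bar>\<Sum>j\<in>UNIV - {snd p}. H (snd p) j (fst p)\<bar>)"
  have "bdd_above ((\<lambda>p. \<bar>\<Sum>j\<in>UNIV - {snd p}. H (snd p) j (fst p)\<bar>) ` (cbox 0 1 \<times> UNIV))"
    using continuous_on_subset[OF hess_cont U_cube]
    by (intro bdd_above_continuous_family[where f = "\<lambda>k x. \<bar>\<Sum>j\<in>UNIV - {k}. H k j x\<bar>", simplified])
      (auto intro!: continuous_intros)
  from cSUP_upper[OF _ this] have K: "\<bar>\<Sum>j\<in>UNIV - {i}. H i j x\<bar> \<le> K" if "x \<in> cbox 0 1" for x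
    unfolding K_def using that by fastforce
  have diagonal_in_U: "t *\<^sub>R 1 \<in> U" if "t \<in> {0..1}" for t :: real
    using that U_cube by (auto simp: mem_box_cart)
  have edge_in_U: "0 + t *\<^sub>R axis i 1 \<in> U" if "t \<in> {0..1}" for t :: real
    using that U_cube by (auto simp: mem_box_cart axis_def)
  have edge: "((\<lambda>t. D i (t *\<^sub>R axis i 1)) has_integral g (axis i 1) - g 0) {0..1}"
    using has_integral_gradient_along_line[OF grad edge_in_U] by (simp add: sum_mult_axis_1)
  have D_cont: "continuous_on U (D k)" for k
    using hess has_derivative_continuous continuous_at_imp_continuous_on by blast
  have diagonal: "(\<lambda>t. D i (t *\<^sub>R 1)) integrable_on {0..1}"
    using diagonal_in_U
    by (intro integrable_continuous_real continuous_on_compose2[OF D_cont] continuous_intros) auto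
  have "\<bar>integral {0..1} (\<lambda>t. D i (t *\<^sub>R 1)) - (g (axis i 1) - g 0)\<bar>
      = \<bar>integral {0..1} (\<lambda>t. D i (t *\<^sub>R 1) - D i (t *\<^sub>R axis i 1))\<bar>"
    using integral_diff[OF diagonal has_integral_integrable[OF edge]] integral_unique[OF edge] by simp
  also have "\<dots> \<le> integral {0..1} (\<lambda>t. t * K)"
    using integral_norm_bound_integral[OF integrable_diff[OF diagonal has_integral_integrable[OF edge]]
        has_integral_integrable[OF has_integral_id_times_const]]
      partial_diagonal_minus_partial_edge_bound[OF hess[of _ i] U_cube K]
    by simp
  also have "\<dots> = K / 2"
    by (rule integral_unique[OF has_integral_id_times_const])
  finally show ?thesis unfolding K_def .
qed

end
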